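(* The maps $\alpha_*,\gamma_*,\alpha_{\le\omega},\gamma_{\le\omega}$ are monotone and form Galois connections: for all $U\subseteq\Sigma^*$, $\mathcal U\in\mathcal M_*$, $\alpha_*(U)\subseteq\mathcal U$ iff $U\subseteq\gamma_*(\mathcal U)$; and for all $V\subseteq\Sigma^{\le\omega}$, $\mathcal V\in\mathcal M_{\le\omega}$, $\alpha_{\le\omega}(V)\subseteq\mathcal V$ iff $V\subseteq\gamma_{\le\omega}(\mathcal V)$. Moreover $\alpha_*(\gamma_*(\mathcal U))=\mathcal U$ and $\alpha_{\le\omega}(\gamma_{\le\omega}(\mathcal V))=\mathcal V$ for all $\mathcal U\in\mathcal M_*$, $\mathcal V\in\mathcal M_{\le\omega}$. Furthermore, all four maps preserve unions and least and greatest elements, and $\gamma_*$ and $\gamma_{\le\omega}$ preserve intersections.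
   Context: $\Sigma$ is a finite alphabet, $\Sigma^{\le\omega}=\Sigma^*\cup\Sigma^\omega$; concatenation $w\cdot u$ equals $wu$ if $w$ is finite and $w$ if $w$ is infinite, extended pointwise to languages. For $A\subseteq\Sigma^*$, $A^\omega$ is the set of all words $w_0w_1w_2\cdots$ with $w_i\in A$, and $CD^\omega$ means $C\cdot D^\omega$. Fix an extended Büchi automaton $\mathfrak A=(Q,\Sigma,\delta,q_0,F)$ (finite states, $\delta:Q\times\Sigma\to\mathcal P(Q)$, initial $q_0$, final $F$). For $w\in\Sigma^*$ write $p\overset{w}{\leadsto}q$ if $q$ is reachable from $p$ reading $w$, and $p\overset{w}{\leadsto}_F q$ if there are $q''\in F$, $w=uv$ with $p\overset{u}{\leadsto}q''\overset{v}{\leadsto}q$. For $w,u\in\Sigma^+$, $w\sim u$ iff for all $p,q$: $p\overset{w}{\leadsto}q\Leftrightarrow p\overset{u}{\leadsto}q$ and $p\overset{w}{\leadsto}_Fq\Leftrightarrow p\overset{u}{\leadsto}_Fq$. $\mathcal Q=\Sigma^+/{\sim}\uplus\{[\epsilon]\}$ with $[\epsilon]=\{\epsilon\}$; concatenation of classes is well defined. Let $\mathcal C=\{(C,D)\mid C,D\in\mathcal Q,\ CD=C,\ DD=D\}$. Define $\mathfrak f(V)=\{(C,D)\in\mathcal C\mid CD^\omega\cap V\neq\emptyset\}$ for $V\subseteq\Sigma^{\le\omega}$ and $\mathfrak g(\mathcal V)=\bigcup_{(C,D)\in\mathcal V}CD^\omega$ for $\mathcal V\subseteq\mathcal C$.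 $\mathcal V$ is closed if $\mathfrak f(\mathfrak g(\mathcal V))=\mathcal V$; the closure is $\mathfrak c(\mathcal V)=\bigcup_{n\ge1}(\mathfrak f\circ\mathfrak g)^n(\mathcal V)$. $\mathcal M_{\le\omega}=\{\mathfrak c(\mathfrak f(V))\mid V\subseteq\Sigma^{\le\omega}\}$ and $\mathcal M_*=\mathcal P(\mathcal Q)$, both ordered by inclusion. Abstraction functions: $\alpha_*(U)=\{C\in\mathcal Q\mid C\cap U\neq\emptyset\}$ for $U\subseteq\Sigma^*$, and $\alpha_{\le\omega}(V)=\mathfrak c(\mathfrak f(V))$ for $V\subseteq\Sigma^{\le\omega}$. Concretization functions: $\gamma_*(\mathcal U)=\bigcup_{C\in\mathcal U}C$ and $\gamma_{\le\omega}(\mathcal V)=\mathfrak g(\mathcal V)$. *)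

theory Defs
  imports Main
begin

datatype 'a xword = Fin "'a list" | Inf "nat \<Rightarrow> 'a"

fun xconc :: "'a xword \<Rightarrow> 'a xword \<Rightarrow> 'a xword" where
  "xconc (Fin u) (Fin v) = Fin (u @ v)"
| "xconc (Fin u) (Inf w) = Inf (\<lambda>k. if k < length u then u ! k else w (k - length u))"
| "xconc (Inf w) _ = Inf w"

text \<open>x is the (possibly finite) concatenation w_0 w_1 w_2 ... of the sequence f.\<close>
definition omega_concat :: "(nat \<Rightarrow> 'a list) \<Rightarrow> 'a xword \<Rightarrow> bool" where
  "omega_concat f x \<longleftrightarrow> (case x of
      Fin u \<Rightarrow> (\<exists>n. (\<forall>i\<ge>n. f i = []) \<and> u = concat (map f [0..<n]))
    | Inf w \<Rightarrow> (\<forall>n. \<exists>i\<ge>n. f i \<noteq> []) \<and>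
               (\<forall>n k. k < length (concat (map f [0..<n])) \<longrightarrow> w k = concat (map f [0..<n]) ! k))"

definition omega_lang :: "'a list set \<Rightarrow> 'a xword set" where
  "omega_lang A = {x. \<exists>f. (\<forall>i. f i \<in> A) \<and> omega_concat f x}"

definition cd_omega :: "'a list set \<Rightarrow> 'a list set \<Rightarrow> 'a xword set" where
  "cd_omega C D = {xconc (Fin u) x | u x. u \<in> C \<and> x \<in> omega_lang D}"

text \<open>Automaton (Q, Sigma, delta, q0, F) with Q = the finite type 'q; q0 plays no role below.\<close>
fun reach :: "('q \<Rightarrow> 'a \<Rightarrow> 'q set) \<Rightarrow> 'q \<Rightarrow> 'a list \<Rightarrow> 'q \<Rightarrow> bool" where
  "reach \<delta> p [] q = (p = q)"
| "reach \<delta> p (a # w) q = (\<exists>q'\<in>\<delta> p a. reach \<delta> q' w q)"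

definition reachF :: "('q \<Rightarrow> 'a \<Rightarrow> 'q set) \<Rightarrow> 'q set \<Rightarrow> 'q \<Rightarrow> 'a list \<Rightarrow> 'q \<Rightarrow> bool" where
  "reachF \<delta> F p w q \<longleftrightarrow> (\<exists>q'' u v. q'' \<in> F \<and> w = u @ v \<and> reach \<delta> p u q'' \<and> reach \<delta> q'' v q)"

definition wequiv :: "('q \<Rightarrow> 'a \<Rightarrow> 'q set) \<Rightarrow> 'q set \<Rightarrow> 'a list \<Rightarrow> 'a list \<Rightarrow> bool" where
  "wequiv \<delta> F w u \<longleftrightarrow> w \<noteq> [] \<and> u \<noteq> [] \<and>
     (\<forall>p q. (reach \<delta> p w q \<longleftrightarrow> reach \<delta> p u q) \<and> (reachF \<delta> F p w q \<longleftrightarrow> reachF \<delta> F p u q))"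

definition cls :: "('q \<Rightarrow> 'a \<Rightarrow> 'q set) \<Rightarrow> 'q set \<Rightarrow> 'a list \<Rightarrow> 'a list set" where
  "cls \<delta> F w = (if w = [] then {[]} else {u. wequiv \<delta> F w u})"

definition Qcls :: "('q \<Rightarrow> 'a \<Rightarrow> 'q set) \<Rightarrow> 'q set \<Rightarrow> 'a list set set" where
  "Qcls \<delta> F = range (cls \<delta> F)"

definition cconc :: "('q \<Rightarrow> 'a \<Rightarrow> 'q set) \<Rightarrow> 'q set \<Rightarrow> 'a list set \<Rightarrow> 'a list set \<Rightarrow> 'a list set" where
  "cconc \<delta> F C D = cls \<delta> F ((SOME u. u \<in> C) @ (SOME v. v \<in> D))"

definition Cpairs :: "('q \<Rightarrow> 'a \<Rightarrow> 'q set) \<Rightarrow> 'q set \<Rightarrow> ('a list set \<times> 'a list set) set" where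
  "Cpairs \<delta> F = {(C, D). C \<in> Qcls \<delta> F \<and> D \<in> Qcls \<delta> F \<and> cconc \<delta> F C D = C \<and> cconc \<delta> F D D = D}"

definition fmap :: "('q \<Rightarrow> 'a \<Rightarrow> 'q set) \<Rightarrow> 'q set \<Rightarrow> 'a xword set \<Rightarrow> ('a list set \<times> 'a list set) set" where
  "fmap \<delta> F V = {(C, D) \<in> Cpairs \<delta> F. cd_omega C D \<inter> V \<noteq> {}}"

definition gmap :: "('a list set \<times> 'a list set) set \<Rightarrow> 'a xword set" where
  "gmap \<V> = (\<Union>(C, D)\<in>\<V>. cd_omega C D)"

definition closure_c :: "('q \<Rightarrow> 'a \<Rightarrow> 'q set) \<Rightarrow> 'q set \<Rightarrow> ('a list set \<times> 'a list set) set \<Rightarrow> ('a list set \<times> 'a list set) set" where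
  "closure_c \<delta> F \<V> = (\<Union>n\<in>{1..}. ((fmap \<delta> F \<circ> gmap) ^^ n) \<V>)"

definition M_omega :: "('q \<Rightarrow> 'a \<Rightarrow> 'q set) \<Rightarrow> 'q set \<Rightarrow> ('a list set \<times> 'a list set) set set" where
  "M_omega \<delta> F = {closure_c \<delta> F (fmap \<delta> F V) | V. True}"

definition M_star :: "('q \<Rightarrow> 'a \<Rightarrow> 'q set) \<Rightarrow> 'q set \<Rightarrow> 'a list set set set" where
  "M_star \<delta> F = Pow (Qcls \<delta> F)"

definition alpha_star :: "('q \<Rightarrow> 'a \<Rightarrow> 'q set) \<Rightarrow> 'q set \<Rightarrow> 'a list set \<Rightarrow> 'a list set set" where
  "alpha_star \<delta> F U = {C \<in> Qcls \<delta> F. C \<inter> U \<noteq> {}}"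

definition gamma_star :: "'a list set set \<Rightarrow> 'a list set" where
  "gamma_star \<U> = \<Union>\<U>"

definition alpha_omega :: "('q \<Rightarrow> 'a \<Rightarrow> 'q set) \<Rightarrow> 'q set \<Rightarrow> 'a xword set \<Rightarrow> ('a list set \<times> 'a list set) set" where
  "alpha_omega \<delta> F V = closure_c \<delta> F (fmap \<delta> F V)"

definition gamma_omega :: "('a list set \<times> 'a list set) set \<Rightarrow> 'a xword set" where
  "gamma_omega \<V> = gmap \<V>"

end

theory Submission
  imports Defs "HOL-Library.Ramsey"
begin

(* Everything hinges on the fact that the sets C D\<^sup>\<omega> with (C, D) \<in> \<C> cover all finite
   and infinite words.  A finite word u lies in [u] [\<epsilon>]\<^sup>\<omega>.  For an infinite word w, Ramsey's
   theorem, applied to the colouring of pairs i < j by the profile (the two reachability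
   relations) of the factor w[i..j), yields positions e\<^sub>0 < e\<^sub>1 < ... at which all factors
   w[e\<^sub>i..e\<^sub>j) lie in one class D; then DD = D, and u = w[0..e\<^sub>1) satisfies [u] D = [u], so
   w \<in> [u] D\<^sup>\<omega>.  The rest is bookkeeping: the classes partition \<Sigma>\<^sup>*, and every C D\<^sup>\<omega>
   with (C, D) \<in> \<C> is nonempty, so f \<circ> g is inflationary on subsets of \<C>; hence the
   closure is an increasing union, is itself closed, and a closed \<V> contains every pair
   whose C D\<^sup>\<omega> meets g(\<V>). *)

lemma reach_append: "reach \<delta> p (u @ v) q \<longleftrightarrow> (\<exists>r. reach \<delta> p u r \<and> reach \<delta> r v q)"
  by (induction u arbitrary: p) auto

lemma reachF_append:
  "reachF \<delta> F p (u @ v) q \<longleftrightarrow>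
     (\<exists>r. reachF \<delta> F p u r \<and> reach \<delta> r v q) \<or> (\<exists>r. reach \<delta> p u r \<and> reachF \<delta> F r v q)"
proof
  assume "reachF \<delta> F p (u @ v) q"
  then obtain f u' v' where f: "f \<in> F" "u @ v = u' @ v'" "reach \<delta> p u' f" "reach \<delta> f v' q"
    unfolding reachF_def by blast
  from f(2) obtain s where "u = u' @ s \<and> s @ v = v' \<or> u @ s = u' \<and> v = s @ v'"
    by (auto simp: append_eq_append_conv2)
  then show "(\<exists>r. reachF \<delta> F p u r \<and> reach \<delta> r v q) \<or> (\<exists>r. reach \<delta> p u r \<and> reachF \<delta> F r v q)"
  proof
    assume s: "u = u' @ s \<and> s @ v = v'"
    then obtain r where "reach \<delta> f s r" "reach \<delta> r v q"
      using f(4) reach_append by metis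
    with s f show ?thesis unfolding reachF_def by blast
  next
    assume s: "u @ s = u' \<and> v = s @ v'"
    then obtain r where "reach \<delta> p u r" "reach \<delta> r s f"
      using f(3) reach_append by metis
    with s f show ?thesis unfolding reachF_def by blast
  qed
next
  assume "(\<exists>r. reachF \<delta> F p u r \<and> reach \<delta> r v q) \<or> (\<exists>r. reach \<delta> p u r \<and> reachF \<delta> F r v q)"
  then show "reachF \<delta> F p (u @ v) q"
    unfolding reachF_def by (smt (verit, best) append.assoc reach_append)
qed

definition profile ::
    "('q \<Rightarrow> 'a \<Rightarrow> 'q set) \<Rightarrow> 'q set \<Rightarrow> 'a list \<Rightarrow> (('q \<Rightarrow> 'q \<Rightarrow> bool) \<times> ('q \<Rightarrow> 'q \<Rightarrow> bool)) option"
  where "profile \<delta> F w =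
    (if w = [] then None else Some (\<lambda>p q. reach \<delta> p w q, \<lambda>p q. reachF \<delta> F p w q))"

lemma profile_append_cong:
  "profile \<delta> F u = profile \<delta> F u' \<Longrightarrow> profile \<delta> F v = profile \<delta> F v' \<Longrightarrow>
    profile \<delta> F (u @ v) = profile \<delta> F (u' @ v')"
  unfolding profile_def by (auto simp: fun_eq_iff reach_append reachF_append split: if_splits)

lemma cls_eq_profile_fibre: "cls \<delta> F w = {u. profile \<delta> F u = profile \<delta> F w}"
  unfolding cls_def wequiv_def profile_def by (auto simp: fun_eq_iff)

lemma mem_cls_iff: "u \<in> cls \<delta> F w \<longleftrightarrow> profile \<delta> F u = profile \<delta> F w"
  by (simp add: cls_eq_profile_fibre)

lemma cls_eq_iff: "cls \<delta> F w = cls \<delta> F w' \<longleftrightarrow> profile \<delta> F w = profile \<delta> F w'"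
  by (auto simp: cls_eq_profile_fibre)

lemma cls_self: "w \<in> cls \<delta> F w"
  by (simp add: mem_cls_iff)

lemma cls_Nil: "cls \<delta> F [] = {[]}"
  by (simp add: cls_def)

lemma Qcls_disjoint: "C \<in> Qcls \<delta> F \<Longrightarrow> C' \<in> Qcls \<delta> F \<Longrightarrow> x \<in> C \<Longrightarrow> x \<in> C' \<Longrightarrow> C = C'"
  unfolding Qcls_def by (auto simp: cls_eq_iff mem_cls_iff)

lemma Qcls_nonempty: "C \<in> Qcls \<delta> F \<Longrightarrow> C \<noteq> {}"
  unfolding Qcls_def using cls_self by blast

lemma Qcls_covers: "\<exists>C\<in>Qcls \<delta> F. w \<in> C"
  unfolding Qcls_def using cls_self by blast

lemma cconc_cls: "cconc \<delta> F (cls \<delta> F u) (cls \<delta> F v) = cls \<delta> F (u @ v)"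
proof -
  have "(SOME u'. u' \<in> cls \<delta> F u) \<in> cls \<delta> F u" "(SOME v'. v' \<in> cls \<delta> F v) \<in> cls \<delta> F v"
    using cls_self by (metis someI)+
  then show ?thesis
    unfolding cconc_def cls_eq_iff mem_cls_iff by (rule profile_append_cong)
qed

definition segment :: "(nat \<Rightarrow> 'a) \<Rightarrow> nat \<Rightarrow> nat \<Rightarrow> 'a list"
  where "segment w i j = map w [i..<j]"

lemma segment_append: "i \<le> j \<Longrightarrow> j \<le> k \<Longrightarrow> segment w i j @ segment w j k = segment w i k"
  unfolding segment_def by (metis map_append le_Suc_ex upt_add_eq_append)

lemma concat_segments:
  assumes "mono e"
  shows "concat (map (\<lambda>k. segment w (e k) (e (Suc k))) [0..<n]) = segment w (e 0) (e n)"
proof (induction n)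
  case 0
  then show ?case by (simp add: segment_def)
next
  case (Suc n)
  have "e 0 \<le> e n" "e n \<le> e (Suc n)" using assms by (simp_all add: monoD)
  with Suc.IH show ?case by (simp add: segment_append)
qed

lemma omega_concat_segments:
  assumes "strict_mono e"
  shows "omega_concat (\<lambda>k. segment w (e k) (e (Suc k))) (Inf (\<lambda>k. w (e 0 + k)))"
proof -
  have "segment w (e n) (e (Suc n)) \<noteq> []" for n
    using strict_monoD[OF assms, of n "Suc n"] by (simp add: segment_def)
  then show ?thesis
    unfolding omega_concat_def concat_segments[OF strict_mono_mono[OF assms]]
    by (auto simp: segment_def)
qed

lemma Inf_eq_xconc_prefix: "Inf w = xconc (Fin (segment w 0 n)) (Inf (\<lambda>k. w (n + k)))"
  by (simp add: segment_def fun_eq_iff)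

lemma segment_periodic:
  assumes "u \<noteq> []"
  shows "segment (\<lambda>k. u ! (k mod length u)) (n * length u) (Suc n * length u) = u"
  by (rule nth_equalityI) (simp_all add: segment_def)

lemma omega_langI: "(\<And>i. f i \<in> A) \<Longrightarrow> omega_concat f x \<Longrightarrow> x \<in> omega_lang A"
  unfolding omega_lang_def by blast

lemma Fin_Nil_in_omega_lang: "Fin [] \<in> omega_lang {[]}"
  by (rule omega_langI[of "\<lambda>_. []"]) (simp_all add: omega_concat_def)

lemma omega_lang_cls_nonempty: "omega_lang (cls \<delta> F u) \<noteq> {}"
proof (cases "u = []")
  case True
  then show ?thesis
    using Fin_Nil_in_omega_lang by (auto simp: cls_Nil)
next
  case False
  define e where "e n = n * length u" for n
  define p where "p k = u ! (k mod length u)" for k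
  have "strict_mono e"
    using False by (simp add: e_def strict_mono_def)
  moreover have "segment p (e n) (e (Suc n)) = u" for n
    unfolding p_def e_def by (rule segment_periodic[OF False])
  ultimately have "omega_concat (\<lambda>_. u) (Inf p)"
    using omega_concat_segments[of e p] by (simp add: e_def)
  then have "Inf p \<in> omega_lang (cls \<delta> F u)"
    by (rule omega_langI[rotated]) (rule cls_self)
  then show ?thesis by blast
qed

lemma cd_omega_nonempty: "(C, D) \<in> Cpairs \<delta> F \<Longrightarrow> cd_omega C D \<noteq> {}"
  unfolding Cpairs_def Qcls_def cd_omega_def using cls_self omega_lang_cls_nonempty by fast

lemma ramsey_monochromatic_chain:
  fixes c :: "nat \<Rightarrow> nat \<Rightarrow> 'b::finite"
  obtains e :: "nat \<Rightarrow> nat" where "strict_mono e" "\<And>i j. i < j \<Longrightarrow> c (e i) (e j) = c (e 0) (e 1)"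
proof -
  obtain g :: "'b \<Rightarrow> nat" where g: "bij_betw g UNIV {0..<card (UNIV :: 'b set)}"
    using ex_bij_betw_finite_nat[of "UNIV :: 'b set"] by auto
  define col where "col X = g (c (Min X) (Max X))" for X
  have "\<forall>x\<in>UNIV. \<forall>y\<in>UNIV. x \<noteq> y \<longrightarrow> col {x, y} < card (UNIV :: 'b set)"
    using g by (auto simp: col_def bij_betw_def)
  from Ramsey2[OF infinite_UNIV_nat this] obtain Y t
    where Y: "infinite Y" "\<forall>x\<in>Y. \<forall>y\<in>Y. x \<noteq> y \<longrightarrow> col {x, y} = t"
    by blast
  define e where "e = enumerate Y"
  have e: "strict_mono e" "range e = Y"
    using Y(1) by (simp_all add: e_def strict_mono_enumerate range_enumerate)
  have same_colour: "g (c (e i) (e j)) = t" if "i < j" for i j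
  proof -
    have "e i < e j" using e(1) that by (rule strict_monoD)
    moreover have "e i \<in> Y" "e j \<in> Y"
      using e(2) by auto
    then have "col {e i, e j} = t"
      using Y(2) \<open>e i < e j\<close> by simp
    ultimately show ?thesis
      by (simp add: col_def)
  qed
  have "inj g"
    using g by (simp add: bij_betw_def)
  then have "c (e i) (e j) = c (e 0) (e 1)" if "i < j" for i j
    by (rule injD) (simp add: same_colour that)
  with e(1) show thesis by (rule that)
qed

lemma idempotent_pair_of_chain:
  fixes e :: "nat \<Rightarrow> nat"
  assumes e: "strict_mono e"
    and const: "\<And>i j. i < j \<Longrightarrow>
      profile \<delta> F (segment w (e i) (e j)) = profile \<delta> F (segment w (e 0) (e 1))"
  shows "(cls \<delta> F (segment w 0 (e 1)), cls \<delta> F (segment w (e 0) (e 1))) \<in> Cpairs \<delta> F"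
proof -
  let ?s = "\<lambda>i j. segment w (e i) (e j)"
  let ?u = "segment w 0 (e 1)"
  \<comment> \<open>?u ends with the D-block ?s 0 1, which is what makes [?u] D = [?u].\<close>
  have le: "e i \<le> e j" if "i \<le> j" for i j
    using strict_mono_mono[OF e] that by (rule monoD)
  have s012: "?s 0 1 @ ?s 1 2 = ?s 0 2"
    using le by (simp add: segment_append)
  have u: "?u = segment w 0 (e 0) @ ?s 0 1"
    using le[of 0 1] by (simp add: segment_append)
  have "profile \<delta> F (?s 0 1 @ ?s 0 1) = profile \<delta> F (?s 0 1 @ ?s 1 2)"
    using const[of 1 2] by (intro profile_append_cong) simp_all
  also have "\<dots> = profile \<delta> F (?s 0 1)"
    unfolding s012 using const[of 0 2] by simp
  finally have DD: "cconc \<delta> F (cls \<delta> F (?s 0 1)) (cls \<delta> F (?s 0 1)) = cls \<delta> F (?s 0 1)"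
    by (simp add: cconc_cls cls_eq_iff)
  have "profile \<delta> F (?u @ ?s 0 1) = profile \<delta> F (?u @ ?s 1 2)"
    using const[of 1 2] by (intro profile_append_cong) simp_all
  also have "\<dots> = profile \<delta> F (segment w 0 (e 0) @ ?s 0 2)"
    unfolding u append_assoc s012 ..
  also have "\<dots> = profile \<delta> F ?u"
    unfolding u using const[of 0 2] by (intro profile_append_cong) simp_all
  finally have CD: "cconc \<delta> F (cls \<delta> F ?u) (cls \<delta> F (?s 0 1)) = cls \<delta> F ?u"
    by (simp add: cconc_cls cls_eq_iff)
  from DD CD show ?thesis
    unfolding Cpairs_def Qcls_def by simp
qed

lemma Cpairs_cover:
  fixes \<delta> :: "'q::finite \<Rightarrow> 'a \<Rightarrow> 'q set"
  obtains C D where "(C, D) \<in> Cpairs \<delta> F" "x \<in> cd_omega C D"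
proof (cases x)
  case (Fin u)
  have "(cls \<delta> F u, cls \<delta> F []) \<in> Cpairs \<delta> F"
    unfolding Cpairs_def Qcls_def by (simp add: cconc_cls)
  moreover have "x \<in> cd_omega (cls \<delta> F u) (cls \<delta> F [])"
    unfolding Fin cd_omega_def mem_Collect_eq
    by (intro exI[of _ u] exI[of _ "Fin []"]) (simp add: cls_self cls_Nil Fin_Nil_in_omega_lang)
  ultimately show thesis
    by (rule that)
next
  case (Inf w)
  obtain e :: "nat \<Rightarrow> nat" where e: "strict_mono e"
    and const: "\<And>i j. i < j \<Longrightarrow>
      profile \<delta> F (segment w (e i) (e j)) = profile \<delta> F (segment w (e 0) (e 1))"
    using ramsey_monochromatic_chain[of "\<lambda>i j. profile \<delta> F (segment w i j)"] by blast
  define C where "C = cls \<delta> F (segment w 0 (e 1))"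
  define D where "D = cls \<delta> F (segment w (e 0) (e 1))"
  have "strict_mono (\<lambda>k. e (Suc k))"
    using e by (simp add: strict_mono_def)
  then have "omega_concat (\<lambda>k. segment w (e (Suc k)) (e (Suc (Suc k)))) (Inf (\<lambda>k. w (e 1 + k)))"
    using omega_concat_segments[of "\<lambda>k. e (Suc k)" w] by simp
  moreover have "segment w (e (Suc k)) (e (Suc (Suc k))) \<in> D" for k
    unfolding D_def mem_cls_iff by (rule const) simp
  ultimately have "Inf (\<lambda>k. w (e 1 + k)) \<in> omega_lang D"
    by (rule omega_langI[rotated])
  moreover have "Inf w = xconc (Fin (segment w 0 (e 1))) (Inf (\<lambda>k. w (e 1 + k)))"
    by (rule Inf_eq_xconc_prefix)
  ultimately have "x \<in> cd_omega C D"
    unfolding Inf cd_omega_def C_def mem_Collect_eq using cls_self by blast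
  have "(C, D) \<in> Cpairs \<delta> F"
    unfolding C_def D_def using e const by (rule idempotent_pair_of_chain)
  then show thesis
    using \<open>x \<in> cd_omega C D\<close> by (rule that)
qed

lemma mem_gmap: "x \<in> gmap \<V> \<longleftrightarrow> (\<exists>(C, D)\<in>\<V>. x \<in> cd_omega C D)"
  unfolding gmap_def by auto

lemma mono_gmap: "mono gmap"
  unfolding gmap_def by (rule monoI) auto

lemma gmap_Un: "gmap (\<V> \<union> \<W>) = gmap \<V> \<union> gmap \<W>"
  unfolding gmap_def by auto

lemma gmap_UN: "gmap (\<Union>n. \<V> n) = (\<Union>n. gmap (\<V> n))"
  unfolding gmap_def by auto

lemma mem_fmap: "(C, D) \<in> fmap \<delta> F V \<longleftrightarrow> (C, D) \<in> Cpairs \<delta> F \<and> cd_omega C D \<inter> V \<noteq> {}"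
  unfolding fmap_def by auto

lemma mono_fmap: "mono (fmap \<delta> F)"
  unfolding fmap_def by (rule monoI) auto

lemma fmap_Un: "fmap \<delta> F (V \<union> W) = fmap \<delta> F V \<union> fmap \<delta> F W"
  unfolding fmap_def by auto

lemma fmap_UN: "fmap \<delta> F (\<Union>n. V n) = (\<Union>n. fmap \<delta> F (V n))"
  unfolding fmap_def by auto

lemma fmap_empty: "fmap \<delta> F {} = {}"
  unfolding fmap_def by auto

lemma fmap_subset_Cpairs: "fmap \<delta> F V \<subseteq> Cpairs \<delta> F"
  unfolding fmap_def by auto

lemma subset_fmap_gmap: "\<V> \<subseteq> Cpairs \<delta> F \<Longrightarrow> \<V> \<subseteq> fmap \<delta> F (gmap \<V>)"
  using cd_omega_nonempty by (fastforce simp: mem_fmap mem_gmap)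

lemma closure_c_eq_UN: "closure_c \<delta> F \<V> = (\<Union>n. ((fmap \<delta> F \<circ> gmap) ^^ Suc n) \<V>)"
proof -
  have "{1..} = range Suc"
    by (auto simp: image_iff) (metis Suc_pred' less_eq_Suc_le One_nat_def)
  then show ?thesis
    unfolding closure_c_def by (simp add: image_image)
qed

lemma funpow_fmap_gmap_Un:
  "((fmap \<delta> F \<circ> gmap) ^^ n) (\<V> \<union> \<W>) = ((fmap \<delta> F \<circ> gmap) ^^ n) \<V> \<union> ((fmap \<delta> F \<circ> gmap) ^^ n) \<W>"
  by (induction n) (simp_all add: fmap_Un gmap_Un)

lemma funpow_fmap_gmap_Suc_subset:
  "((fmap \<delta> F \<circ> gmap) ^^ Suc n) \<V> \<subseteq> ((fmap \<delta> F \<circ> gmap) ^^ Suc (Suc n)) \<V>"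
  using subset_fmap_gmap[OF fmap_subset_Cpairs] by simp

lemma closure_c_closed: "fmap \<delta> F (gmap (closure_c \<delta> F \<V>)) = closure_c \<delta> F \<V>"
proof -
  let ?h = "fmap \<delta> F \<circ> gmap"
  have "fmap \<delta> F (gmap (closure_c \<delta> F \<V>)) = (\<Union>n. (?h ^^ Suc (Suc n)) \<V>)"
    unfolding closure_c_eq_UN gmap_UN fmap_UN by simp
  also have "\<dots> = (\<Union>n. (?h ^^ Suc n) \<V>)"
  proof (rule subset_antisym)
    show "(\<Union>n. (?h ^^ Suc (Suc n)) \<V>) \<subseteq> (\<Union>n. (?h ^^ Suc n) \<V>)"
      by blast
    show "(\<Union>n. (?h ^^ Suc n) \<V>) \<subseteq> (\<Union>n. (?h ^^ Suc (Suc n)) \<V>)"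
      using funpow_fmap_gmap_Suc_subset by blast
  qed
  finally show ?thesis
    unfolding closure_c_eq_UN .
qed

lemma closure_c_of_closed: "fmap \<delta> F (gmap \<V>) = \<V> \<Longrightarrow> closure_c \<delta> F \<V> = \<V>"
proof -
  assume closed: "fmap \<delta> F (gmap \<V>) = \<V>"
  then have "((fmap \<delta> F \<circ> gmap) ^^ n) \<V> = \<V>" for n
    by (induction n) simp_all
  then show ?thesis
    unfolding closure_c_eq_UN using closed by simp
qed

lemma mono_closure_c: "mono (closure_c \<delta> F)"
proof (rule monoI)
  have "mono (fmap \<delta> F \<circ> gmap)"
    using mono_fmap mono_gmap by (rule monotone_on_o) simp
  then show "\<V> \<subseteq> \<W> \<Longrightarrow> closure_c \<delta> F \<V> \<subseteq> closure_c \<delta> F \<W>" for \<V> \<W>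
    unfolding closure_c_eq_UN by (intro UN_mono order_refl funpow_mono)
qed

lemma closure_c_Un: "closure_c \<delta> F (\<V> \<union> \<W>) = closure_c \<delta> F \<V> \<union> closure_c \<delta> F \<W>"
  unfolding closure_c_eq_UN funpow_fmap_gmap_Un by (rule UN_Un_distrib)

lemma fmap_subset_closure_c: "fmap \<delta> F V \<subseteq> closure_c \<delta> F (fmap \<delta> F V)"
proof -
  have "fmap \<delta> F V \<subseteq> ((fmap \<delta> F \<circ> gmap) ^^ Suc 0) (fmap \<delta> F V)"
    using subset_fmap_gmap[OF fmap_subset_Cpairs] by simp
  then show ?thesis
    unfolding closure_c_eq_UN by blast
qed

lemma alpha_star_in_M_star: "alpha_star \<delta> F U \<in> M_star \<delta> F"
  unfolding alpha_star_def M_star_def by blast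

lemma mono_alpha_star: "mono (alpha_star \<delta> F)"
  unfolding alpha_star_def by (rule monoI) blast

lemma mono_gamma_star: "mono gamma_star"
  unfolding gamma_star_def by (rule monoI) blast

lemma alpha_star_Un: "alpha_star \<delta> F (U \<union> V) = alpha_star \<delta> F U \<union> alpha_star \<delta> F V"
  unfolding alpha_star_def by blast

lemma gamma_star_Un: "gamma_star (\<U> \<union> \<W>) = gamma_star \<U> \<union> gamma_star \<W>"
  unfolding gamma_star_def by blast

lemma alpha_star_le_iff:
  assumes "\<U> \<in> M_star \<delta> F"
  shows "alpha_star \<delta> F U \<subseteq> \<U> \<longleftrightarrow> U \<subseteq> gamma_star \<U>"
proof
  assume le: "alpha_star \<delta> F U \<subseteq> \<U>"
  show "U \<subseteq> gamma_star \<U>"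
  proof
    fix w
    assume "w \<in> U"
    obtain C where "C \<in> Qcls \<delta> F" "w \<in> C"
      using Qcls_covers by blast
    with \<open>w \<in> U\<close> le show "w \<in> gamma_star \<U>"
      unfolding alpha_star_def gamma_star_def by blast
  qed
next
  assume U: "U \<subseteq> gamma_star \<U>"
  show "alpha_star \<delta> F U \<subseteq> \<U>"
  proof
    fix C
    assume "C \<in> alpha_star \<delta> F U"
    then obtain w where C: "C \<in> Qcls \<delta> F" "w \<in> C" "w \<in> U"
      unfolding alpha_star_def by blast
    with U obtain C' where C': "C' \<in> \<U>" "w \<in> C'"
      unfolding gamma_star_def by blast
    with assms have "C' \<in> Qcls \<delta> F"
      unfolding M_star_def by blast
    with C C' have "C = C'"
      using Qcls_disjoint by metis
    with C' show "C \<in> \<U>" by simp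
  qed
qed

lemma alpha_star_gamma_star:
  assumes "\<U> \<in> M_star \<delta> F"
  shows "alpha_star \<delta> F (gamma_star \<U>) = \<U>"
proof
  show "alpha_star \<delta> F (gamma_star \<U>) \<subseteq> \<U>"
    using assms alpha_star_le_iff by blast
  show "\<U> \<subseteq> alpha_star \<delta> F (gamma_star \<U>)"
  proof
    fix C
    assume "C \<in> \<U>"
    with assms have "C \<in> Qcls \<delta> F"
      unfolding M_star_def by blast
    then obtain w where "w \<in> C"
      using Qcls_nonempty by blast
    with \<open>C \<in> \<U>\<close> \<open>C \<in> Qcls \<delta> F\<close> show "C \<in> alpha_star \<delta> F (gamma_star \<U>)"
      unfolding alpha_star_def gamma_star_def by blast
  qed
qed

lemma gamma_star_Int:
  assumes "\<U>1 \<in> M_star \<delta> F" "\<U>2 \<in> M_star \<delta> F"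
  shows "gamma_star (\<U>1 \<inter> \<U>2) = gamma_star \<U>1 \<inter> gamma_star \<U>2"
proof
  show "gamma_star (\<U>1 \<inter> \<U>2) \<subseteq> gamma_star \<U>1 \<inter> gamma_star \<U>2"
    unfolding gamma_star_def by blast
  show "gamma_star \<U>1 \<inter> gamma_star \<U>2 \<subseteq> gamma_star (\<U>1 \<inter> \<U>2)"
  proof
    fix w
    assume "w \<in> gamma_star \<U>1 \<inter> gamma_star \<U>2"
    then obtain C1 C2 where "C1 \<in> \<U>1" "C2 \<in> \<U>2" "w \<in> C1" "w \<in> C2"
      unfolding gamma_star_def by blast
    moreover have "C1 \<in> Qcls \<delta> F" "C2 \<in> Qcls \<delta> F"
      using assms calculation unfolding M_star_def by blast+
    ultimately show "w \<in> gamma_star (\<U>1 \<inter> \<U>2)"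
      unfolding gamma_star_def using Qcls_disjoint by (metis IntI UnionI)
  qed
qed

lemma empty_in_M_star: "{} \<in> M_star \<delta> F"
  unfolding M_star_def by simp

lemma Qcls_in_M_star: "Qcls \<delta> F \<in> M_star \<delta> F"
  unfolding M_star_def by simp

lemma alpha_star_empty: "alpha_star \<delta> F {} = {}"
  unfolding alpha_star_def by simp

lemma gamma_star_empty: "gamma_star {} = {}"
  unfolding gamma_star_def by simp

lemma gamma_star_eq_UNIV: "Qcls \<delta> F \<subseteq> \<U> \<Longrightarrow> gamma_star \<U> = UNIV"
  unfolding gamma_star_def using Qcls_covers by blast

lemma alpha_omega_in_M_omega: "alpha_omega \<delta> F V \<in> M_omega \<delta> F"
  unfolding alpha_omega_def M_omega_def by blast

lemma mono_alpha_omega: "mono (alpha_omega \<delta> F)"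
  by (rule monoI) (simp add: alpha_omega_def monoD[OF mono_closure_c] monoD[OF mono_fmap])

lemma mono_gamma_omega: "mono gamma_omega"
  unfolding gamma_omega_def by (rule mono_gmap)

lemma M_omega_closed: "\<V> \<in> M_omega \<delta> F \<Longrightarrow> fmap \<delta> F (gmap \<V>) = \<V>"
  unfolding M_omega_def using closure_c_closed by blast

lemma closed_memI:
  assumes "fmap \<delta> F (gmap \<V>) = \<V>" "(C, D) \<in> Cpairs \<delta> F" "x \<in> cd_omega C D" "x \<in> gmap \<V>"
  shows "(C, D) \<in> \<V>"
proof -
  have "(C, D) \<in> fmap \<delta> F (gmap \<V>)"
    using assms(2-4) unfolding mem_fmap by blast
  with assms(1) show ?thesis by simp
qed

lemma alpha_omega_le_iff:
  fixes \<delta> :: "'q::finite \<Rightarrow> 'a \<Rightarrow> 'q set"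
  assumes "\<V> \<in> M_omega \<delta> F"
  shows "alpha_omega \<delta> F V \<subseteq> \<V> \<longleftrightarrow> V \<subseteq> gamma_omega \<V>"
proof
  assume le: "alpha_omega \<delta> F V \<subseteq> \<V>"
  show "V \<subseteq> gamma_omega \<V>"
  proof
    fix x
    assume "x \<in> V"
    obtain C D where CD: "(C, D) \<in> Cpairs \<delta> F" "x \<in> cd_omega C D"
      by (rule Cpairs_cover)
    with \<open>x \<in> V\<close> have "(C, D) \<in> fmap \<delta> F V"
      unfolding mem_fmap by blast
    with le have "(C, D) \<in> \<V>"
      using fmap_subset_closure_c unfolding alpha_omega_def by blast
    with CD show "x \<in> gamma_omega \<V>"
      unfolding gamma_omega_def mem_gmap by blast
  qed
next
  have closed: "fmap \<delta> F (gmap \<V>) = \<V>"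
    using assms by (rule M_omega_closed)
  assume "V \<subseteq> gamma_omega \<V>"
  then have "fmap \<delta> F V \<subseteq> fmap \<delta> F (gmap \<V>)"
    unfolding gamma_omega_def by (rule monoD[OF mono_fmap])
  then have "closure_c \<delta> F (fmap \<delta> F V) \<subseteq> closure_c \<delta> F \<V>"
    unfolding closed by (rule monoD[OF mono_closure_c])
  then show "alpha_omega \<delta> F V \<subseteq> \<V>"
    unfolding alpha_omega_def closure_c_of_closed[OF closed] .
qed

lemma alpha_omega_gamma_omega: "\<V> \<in> M_omega \<delta> F \<Longrightarrow> alpha_omega \<delta> F (gamma_omega \<V>) = \<V>"
  unfolding alpha_omega_def gamma_omega_def by (simp add: M_omega_closed closure_c_of_closed)

lemma alpha_omega_Un: "alpha_omega \<delta> F (V \<union> W) = alpha_omega \<delta> F V \<union> alpha_omega \<delta> F W"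
  unfolding alpha_omega_def fmap_Un closure_c_Un ..

lemma gamma_omega_empty: "gamma_omega {} = {}"
  unfolding gamma_omega_def gmap_def by simp

lemma gamma_omega_Un: "gamma_omega (\<V> \<union> \<W>) = gamma_omega \<V> \<union> gamma_omega \<W>"
  unfolding gamma_omega_def by (rule gmap_Un)

lemma alpha_omega_empty: "alpha_omega \<delta> F {} = {}"
  unfolding alpha_omega_def fmap_empty
  by (rule closure_c_of_closed) (simp add: gamma_omega_empty[unfolded gamma_omega_def] fmap_empty)

lemma empty_in_M_omega: "{} \<in> M_omega \<delta> F"
  using alpha_omega_in_M_omega[of \<delta> F "{}"] by (simp add: alpha_omega_empty)

lemma alpha_omega_UNIV: "alpha_omega \<delta> F UNIV = Cpairs \<delta> F"
proof -
  have closed: "fmap \<delta> F (gmap (Cpairs \<delta> F)) = Cpairs \<delta> F"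
    using fmap_subset_Cpairs subset_fmap_gmap[OF order_refl] by (rule subset_antisym)
  have "fmap \<delta> F UNIV = Cpairs \<delta> F"
    by (auto simp: fmap_def dest: cd_omega_nonempty)
  then show ?thesis
    unfolding alpha_omega_def using closure_c_of_closed[OF closed] by simp
qed

lemma Cpairs_in_M_omega: "Cpairs \<delta> F \<in> M_omega \<delta> F"
  using alpha_omega_in_M_omega[of \<delta> F UNIV] by (simp add: alpha_omega_UNIV)

lemma gamma_omega_eq_UNIV:
  fixes \<delta> :: "'q::finite \<Rightarrow> 'a \<Rightarrow> 'q set"
  assumes "Cpairs \<delta> F \<subseteq> \<V>"
  shows "gamma_omega \<V> = UNIV"
proof (rule set_eqI)
  fix x
  obtain C D where "(C, D) \<in> Cpairs \<delta> F" "x \<in> cd_omega C D"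
    by (rule Cpairs_cover)
  with assms show "x \<in> gamma_omega \<V> \<longleftrightarrow> x \<in> UNIV"
    unfolding gamma_omega_def mem_gmap by blast
qed

lemma gamma_omega_Int:
  fixes \<delta> :: "'q::finite \<Rightarrow> 'a \<Rightarrow> 'q set"
  assumes "\<V>1 \<in> M_omega \<delta> F" "\<V>2 \<in> M_omega \<delta> F"
  shows "gamma_omega (\<V>1 \<inter> \<V>2) = gamma_omega \<V>1 \<inter> gamma_omega \<V>2"
proof
  show "gamma_omega (\<V>1 \<inter> \<V>2) \<subseteq> gamma_omega \<V>1 \<inter> gamma_omega \<V>2"
    unfolding gamma_omega_def gmap_def by blast
  show "gamma_omega \<V>1 \<inter> gamma_omega \<V>2 \<subseteq> gamma_omega (\<V>1 \<inter> \<V>2)"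
  proof
    fix x
    assume x: "x \<in> gamma_omega \<V>1 \<inter> gamma_omega \<V>2"
    obtain C D where CD: "(C, D) \<in> Cpairs \<delta> F" "x \<in> cd_omega C D"
      by (rule Cpairs_cover)
    have "(C, D) \<in> \<V>1" "(C, D) \<in> \<V>2"
      using closed_memI[OF M_omega_closed CD] x assms unfolding gamma_omega_def by simp_all
    with CD show "x \<in> gamma_omega (\<V>1 \<inter> \<V>2)"
      unfolding gamma_omega_def mem_gmap by blast
  qed
qed

theorem lemma8:
  fixes \<delta> :: "'q::finite \<Rightarrow> 'a::finite \<Rightarrow> 'q set" and q0 :: 'q and F :: "'q set"
  shows
    \<comment> \<open>the maps go between the stated domains and are monotone\<close>
    "(\<forall>U. alpha_star \<delta> F U \<in> M_star \<delta> F) \<and> (\<forall>V. alpha_omega \<delta> F V \<in> M_omega \<delta> F) \<and>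
     mono (alpha_star \<delta> F) \<and> mono_on (M_star \<delta> F) gamma_star \<and>
     mono (alpha_omega \<delta> F) \<and> mono_on (M_omega \<delta> F) gamma_omega \<and>
     \<comment> \<open>Galois connections\<close>
     (\<forall>U. \<forall>\<U>\<in>M_star \<delta> F. alpha_star \<delta> F U \<subseteq> \<U> \<longleftrightarrow> U \<subseteq> gamma_star \<U>) \<and>
     (\<forall>V. \<forall>\<V>\<in>M_omega \<delta> F. alpha_omega \<delta> F V \<subseteq> \<V> \<longleftrightarrow> V \<subseteq> gamma_omega \<V>) \<and>
     \<comment> \<open>alpha after gamma is the identity\<close>
     (\<forall>\<U>\<in>M_star \<delta> F. alpha_star \<delta> F (gamma_star \<U>) = \<U>) \<and>
     (\<forall>\<V>\<in>M_omega \<delta> F. alpha_omega \<delta> F (gamma_omega \<V>) = \<V>) \<and>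
     \<comment> \<open>preservation of unions\<close>
     (\<forall>U1 U2. alpha_star \<delta> F (U1 \<union> U2) = alpha_star \<delta> F U1 \<union> alpha_star \<delta> F U2) \<and>
     (\<forall>\<U>1\<in>M_star \<delta> F. \<forall>\<U>2\<in>M_star \<delta> F. gamma_star (\<U>1 \<union> \<U>2) = gamma_star \<U>1 \<union> gamma_star \<U>2) \<and>
     (\<forall>V1 V2. alpha_omega \<delta> F (V1 \<union> V2) = alpha_omega \<delta> F V1 \<union> alpha_omega \<delta> F V2) \<and>
     (\<forall>\<V>1\<in>M_omega \<delta> F. \<forall>\<V>2\<in>M_omega \<delta> F. gamma_omega (\<V>1 \<union> \<V>2) = gamma_omega \<V>1 \<union> gamma_omega \<V>2) \<and>
     \<comment> \<open>preservation of least elements\<close>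
     (\<forall>\<U>\<in>M_star \<delta> F. alpha_star \<delta> F {} \<subseteq> \<U>) \<and>
     (\<forall>\<U>\<in>M_star \<delta> F. (\<forall>\<W>\<in>M_star \<delta> F. \<U> \<subseteq> \<W>) \<longrightarrow> gamma_star \<U> = {}) \<and>
     (\<forall>\<V>\<in>M_omega \<delta> F. alpha_omega \<delta> F {} \<subseteq> \<V>) \<and>
     (\<forall>\<V>\<in>M_omega \<delta> F. (\<forall>\<W>\<in>M_omega \<delta> F. \<V> \<subseteq> \<W>) \<longrightarrow> gamma_omega \<V> = {}) \<and>
     \<comment> \<open>preservation of greatest elements\<close>
     (\<forall>\<U>\<in>M_star \<delta> F. \<U> \<subseteq> alpha_star \<delta> F UNIV) \<and>
     (\<forall>\<U>\<in>M_star \<delta> F. (\<forall>\<W>\<in>M_star \<delta> F. \<W> \<subseteq> \<U>) \<longrightarrow> gamma_star \<U> = UNIV) \<and>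
     (\<forall>\<V>\<in>M_omega \<delta> F. \<V> \<subseteq> alpha_omega \<delta> F UNIV) \<and>
     (\<forall>\<V>\<in>M_omega \<delta> F. (\<forall>\<W>\<in>M_omega \<delta> F. \<W> \<subseteq> \<V>) \<longrightarrow> gamma_omega \<V> = UNIV) \<and>
     \<comment> \<open>the concretizations preserve intersections\<close>
     (\<forall>\<U>1\<in>M_star \<delta> F. \<forall>\<U>2\<in>M_star \<delta> F. gamma_star (\<U>1 \<inter> \<U>2) = gamma_star \<U>1 \<inter> gamma_star \<U>2) \<and>
     (\<forall>\<V>1\<in>M_omega \<delta> F. \<forall>\<V>2\<in>M_omega \<delta> F. gamma_omega (\<V>1 \<inter> \<V>2) = gamma_omega \<V>1 \<inter> gamma_omega \<V>2)"
proof -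
  have star_top: "\<U> \<subseteq> alpha_star \<delta> F UNIV" if "\<U> \<in> M_star \<delta> F" for \<U>
    using monoD[OF mono_alpha_star[of \<delta> F], of "gamma_star \<U>" UNIV] by (simp add: alpha_star_gamma_star that)
  have omega_top: "\<V> \<subseteq> alpha_omega \<delta> F UNIV" if "\<V> \<in> M_omega \<delta> F" for \<V>
    using monoD[OF mono_alpha_omega[of \<delta> F], of "gamma_omega \<V>" UNIV] by (simp add: alpha_omega_gamma_omega that)
  have star_least: "gamma_star \<U> = {}" if "\<forall>\<W>\<in>M_star \<delta> F. \<U> \<subseteq> \<W>" for \<U>
    using bspec[OF that empty_in_M_star] by (simp add: gamma_star_empty)
  have omega_least: "gamma_omega \<V> = {}" if "\<forall>\<W>\<in>M_omega \<delta> F. \<V> \<subseteq> \<W>" for \<V>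
    using bspec[OF that empty_in_M_omega] by (simp add: gamma_omega_empty)
  have star_greatest: "gamma_star \<U> = UNIV" if "\<forall>\<W>\<in>M_star \<delta> F. \<W> \<subseteq> \<U>" for \<U>
    using bspec[OF that Qcls_in_M_star] by (rule gamma_star_eq_UNIV)
  have omega_greatest: "gamma_omega \<V> = UNIV" if "\<forall>\<W>\<in>M_omega \<delta> F. \<W> \<subseteq> \<V>" for \<V>
    using bspec[OF that Cpairs_in_M_omega] by (rule gamma_omega_eq_UNIV)
  show ?thesis
    by (simp add: alpha_star_in_M_star alpha_omega_in_M_omega mono_alpha_star mono_alpha_omega
        mono_imp_mono_on mono_gamma_star mono_gamma_omega alpha_star_le_iff alpha_omega_le_iff
        alpha_star_gamma_star alpha_omega_gamma_omega alpha_star_Un gamma_star_Un alpha_omega_Un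
        gamma_omega_Un alpha_star_empty alpha_omega_empty star_top omega_top star_least omega_least
        star_greatest omega_greatest gamma_star_Int gamma_omega_Int)
qed

end
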